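(* Let $U:\mathbb{R}^d\to\mathbb{R}$ be twice continuously differentiable. For all $q_0,p_0\in\mathbb{R}^d$ and $h>0$, writing $(q_1,p_1)=\Phi_h(q_0,p_0)$ and $q_t=q_0+t(q_1-q_0)$ for $t\in[0,1]$, $$\begin{aligned}H(\Phi_h(q_0,p_0))-H(q_0,p_0)&=h^2\int_0^1\langle p_0,\nabla^2U(q_t)p_0\rangle(1/2-t)\,dt+h^3\int_0^1\langle p_0,\nabla^2U(q_t)\nabla U(q_0)\rangle(t-1/4)\,dt\\&\quad-\frac{h^4}{4}\int_0^1\langle\nabla U(q_0),\nabla^2U(q_t)\nabla U(q_0)\rangle\,t\,dt+\frac{h^4}{8}\Big\|\int_0^1\nabla^2U(q_t)p_0\,dt\Big\|^2\\&\quad-\frac{h^5}{8}\Big\langle\int_0^1\nabla^2U(q_t)\nabla U(q_0)\,dt,\int_0^1\nabla^2U(q_t)p_0\,dt\Big\rangle+\frac{h^6}{32}\Big\|\int_0^1\nabla^2U(q_t)\nabla U(q_0)\,dt\Big\|^2.\end{aligned}$$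
   Context: $H(q,p)=U(q)+\|p\|^2/2$. The leapfrog map is $\Phi_h=\Psi^{(1)}_h\circ\Psi^{(2)}_h\circ\Psi^{(1)}_h$ with $\Psi^{(1)}_h(q,p)=(q,p-(h/2)\nabla U(q))$ and $\Psi^{(2)}_h(q,p)=(q+hp,p)$, i.e. $q_1=q_0+hp_0-(h^2/2)\nabla U(q_0)$ and $p_1=p_0-(h/2)(\nabla U(q_0)+\nabla U(q_1))$. *)

theory Defs
  imports "HOL-Analysis.Analysis"
begin

definition ham :: "('a::real_normed_vector \<Rightarrow> real) \<Rightarrow> 'a \<times> 'a \<Rightarrow> real" where
  "ham U = (\<lambda>(q, p). U q + (norm p)^2 / 2)"

definition kick :: "('a::real_vector \<Rightarrow> 'a) \<Rightarrow> real \<Rightarrow> 'a \<times> 'a \<Rightarrow> 'a \<times> 'a" where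
  "kick gU h = (\<lambda>(q, p). (q, p - (h / 2) *\<^sub>R gU q))"

definition drift :: "real \<Rightarrow> 'a::real_vector \<times> 'a \<Rightarrow> 'a \<times> 'a" where
  "drift h = (\<lambda>(q, p). (q + h *\<^sub>R p, p))"

definition leapfrog :: "('a::real_vector \<Rightarrow> 'a) \<Rightarrow> real \<Rightarrow> 'a \<times> 'a \<Rightarrow> 'a \<times> 'a" where
  "leapfrog gU h = kick gU h \<circ> drift h \<circ> kick gU h"

end

theory Submission
  imports Defs
begin

(* With g = grad U(q0), one leapfrog step moves q by d = h p0 - (h^2/2) g, and all integrals in
   the statement are bilinear forms of the two moments M0 = int_0^1 Hess U(q_t) dt and
   M1 = int_0^1 t Hess U(q_t) dt. The fundamental theorem of calculus along the segment gives
   grad U(q1) = g + M0 d, and Taylor's formula with integral remainder gives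
   U(q1) = U(q0) + <g, d> + <d, (M0 - M1) d>. Substituting both into
   p1 = p0 - (h/2) (g + grad U(q1)) turns the energy error into a polynomial in h; its
   coefficients match the statement once the cross terms <p0, M g> and <g, M p0> are merged,
   which needs the symmetry of the Hessian (Schwarz's theorem). *)

lemma has_vector_derivative_along_line:
  fixes f :: "'a::real_normed_vector \<Rightarrow> 'b::real_normed_vector"
  assumes "\<And>x. (f has_derivative f' x) (at x)"
  shows "((\<lambda>s. f (c + s *\<^sub>R u)) has_vector_derivative f' (c + s *\<^sub>R u) u) (at s within S)"
proof -
  have "((\<lambda>s. c + s *\<^sub>R u) has_derivative (\<lambda>k. k *\<^sub>R u)) (at s within S)"
    by (auto intro!: derivative_eq_intros)
  from has_derivative_compose[OF this assms]
  have "((\<lambda>s. f (c + s *\<^sub>R u)) has_derivative (\<lambda>k. f' (c + s *\<^sub>R u) (k *\<^sub>R u))) (at s within S)"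
    by (simp add: o_def)
  moreover have "linear (f' (c + s *\<^sub>R u))"
    using assms has_derivative_linear by blast
  ultimately show ?thesis
    by (simp add: has_vector_derivative_def linear.scaleR)
qed

lemma has_real_derivative_along_line:
  fixes U :: "'a::real_inner \<Rightarrow> real"
  assumes "\<And>x. (U has_derivative (\<lambda>v. gU x \<bullet> v)) (at x)"
  shows "((\<lambda>s. U (c + s *\<^sub>R u)) has_real_derivative gU (c + s *\<^sub>R u) \<bullet> u) (at s within S)"
  using has_vector_derivative_along_line[OF assms]
  by (simp add: has_real_derivative_iff_has_vector_derivative)

lemma has_real_derivative_inner_along_line:
  fixes gU :: "real^'n \<Rightarrow> real^'n"
  assumes "\<And>x. (gU has_derivative (\<lambda>v. HU x *v v)) (at x)"
  shows "((\<lambda>s. w \<bullet> gU (c + s *\<^sub>R u)) has_real_derivative w \<bullet> (HU (c + s *\<^sub>R u) *v u)) (at s within S)"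
  using bounded_linear.has_vector_derivative[OF bounded_linear_inner_right
      has_vector_derivative_along_line[OF assms]]
  by (simp add: has_real_derivative_iff_has_vector_derivative)

lemma second_difference_mean_value:
  fixes U :: "real^'n \<Rightarrow> real" and gU :: "real^'n \<Rightarrow> real^'n"
  assumes grad: "\<And>x. (U has_derivative (\<lambda>v. gU x \<bullet> v)) (at x)"
    and hess: "\<And>x. (gU has_derivative (\<lambda>v. HU x *v v)) (at x)"
    and "e > 0"
  obtains y where "norm (y - x) \<le> e * (norm u + norm v)"
    and "U (x + e *\<^sub>R u + e *\<^sub>R v) - U (x + e *\<^sub>R u) - U (x + e *\<^sub>R v) + U x
           = e^2 * (u \<bullet> (HU y *v v))"
proof -
  define \<Phi> where "\<Phi> = (\<lambda>s. U ((x + e *\<^sub>R v) + s *\<^sub>R u) - U (x + s *\<^sub>R u))"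
  have "(\<Phi> has_real_derivative gU ((x + e *\<^sub>R v) + s *\<^sub>R u) \<bullet> u - gU (x + s *\<^sub>R u) \<bullet> u) (at s)" for s
    unfolding \<Phi>_def by (intro DERIV_diff has_real_derivative_along_line[OF grad])
  from MVT2[OF \<open>e > 0\<close> this] obtain \<xi> where \<xi>: "0 < \<xi>" "\<xi> < e"
    and \<Phi>_mvt: "\<Phi> e - \<Phi> 0 = e * (u \<bullet> gU ((x + \<xi> *\<^sub>R u) + e *\<^sub>R v) - u \<bullet> gU ((x + \<xi> *\<^sub>R u) + 0 *\<^sub>R v))"
    by (auto simp: algebra_simps inner_commute)
  define \<Psi> where "\<Psi> = (\<lambda>t. u \<bullet> gU ((x + \<xi> *\<^sub>R u) + t *\<^sub>R v))"
  have "(\<Psi> has_real_derivative u \<bullet> (HU ((x + \<xi> *\<^sub>R u) + t *\<^sub>R v) *v v)) (at t)" for t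
    unfolding \<Psi>_def by (rule has_real_derivative_inner_along_line[OF hess])
  from MVT2[OF \<open>e > 0\<close> this] obtain \<eta> where \<eta>: "0 < \<eta>" "\<eta> < e"
    and \<Psi>_mvt: "\<Psi> e - \<Psi> 0 = e * (u \<bullet> (HU ((x + \<xi> *\<^sub>R u) + \<eta> *\<^sub>R v) *v v))"
    by auto
  define y where "y = (x + \<xi> *\<^sub>R u) + \<eta> *\<^sub>R v"
  have "norm (y - x) \<le> \<xi> * norm u + \<eta> * norm v"
    using \<xi> \<eta> norm_triangle_ineq[of "\<xi> *\<^sub>R u" "\<eta> *\<^sub>R v"] by (simp add: y_def)
  also have "\<dots> \<le> e * (norm u + norm v)"
    using \<xi> \<eta> by (simp add: distrib_left add_mono mult_right_mono)
  finally have "norm (y - x) \<le> e * (norm u + norm v)" .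
  moreover have "U (x + e *\<^sub>R u + e *\<^sub>R v) - U (x + e *\<^sub>R u) - U (x + e *\<^sub>R v) + U x = \<Phi> e - \<Phi> 0"
    by (simp add: \<Phi>_def add_ac)
  with \<Phi>_mvt \<Psi>_mvt have "U (x + e *\<^sub>R u + e *\<^sub>R v) - U (x + e *\<^sub>R u) - U (x + e *\<^sub>R v) + U x
      = e^2 * (u \<bullet> (HU y *v v))"
    by (simp add: \<Psi>_def y_def power2_eq_square)
  ultimately show ?thesis by (rule that)
qed

text \<open>Schwarz's theorem: both orders of the second difference equal \<open>e\<^sup>2\<close> times a value of the
  Hessian at points converging to \<open>x\<close> as \<open>e \<rightarrow> 0\<close>.\<close>
lemma hessian_symmetric:
  fixes U :: "real^'n \<Rightarrow> real" and gU :: "real^'n \<Rightarrow> real^'n"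
  assumes grad: "\<And>x. (U has_derivative (\<lambda>v. gU x \<bullet> v)) (at x)"
    and hess: "\<And>x. (gU has_derivative (\<lambda>v. HU x *v v)) (at x)"
    and cont: "continuous_on UNIV HU"
  shows "u \<bullet> (HU x *v v) = v \<bullet> (HU x *v u)"
proof -
  define e where "e = (\<lambda>n. inverse (real (Suc n)))"
  define C where "C = norm u + norm v"
  have "\<exists>y z. norm (y - x) \<le> e n * C \<and> norm (z - x) \<le> e n * C
              \<and> u \<bullet> (HU y *v v) = v \<bullet> (HU z *v u)" for n
  proof -
    have en: "e n > 0" by (simp add: e_def)
    obtain y where y: "norm (y - x) \<le> e n * C"
      "U (x + e n *\<^sub>R u + e n *\<^sub>R v) - U (x + e n *\<^sub>R u) - U (x + e n *\<^sub>R v) + U x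
         = (e n)^2 * (u \<bullet> (HU y *v v))"
      using second_difference_mean_value[OF grad hess en] unfolding C_def by blast
    obtain z where z: "norm (z - x) \<le> e n * C"
      "U (x + e n *\<^sub>R v + e n *\<^sub>R u) - U (x + e n *\<^sub>R v) - U (x + e n *\<^sub>R u) + U x
         = (e n)^2 * (v \<bullet> (HU z *v u))"
      using second_difference_mean_value[OF grad hess en] unfolding C_def by (metis add.commute)
    have swap: "x + e n *\<^sub>R v + e n *\<^sub>R u = x + e n *\<^sub>R u + e n *\<^sub>R v"
      by (simp add: add_ac)
    have "(e n)^2 * (u \<bullet> (HU y *v v)) = (e n)^2 * (v \<bullet> (HU z *v u))"
      using y(2) z(2) unfolding swap by linarith
    with en y(1) z(1) show ?thesis by auto
  qed
  then obtain Y Z where YZ: "\<And>n. norm (Y n - x) \<le> e n * C" "\<And>n. norm (Z n - x) \<le> e n * C"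
    and eq: "\<And>n. u \<bullet> (HU (Y n) *v v) = v \<bullet> (HU (Z n) *v u)"
    by metis
  have e0: "(\<lambda>n. e n * C) \<longlonglongrightarrow> 0"
    unfolding e_def by (intro tendsto_mult_left_zero LIMSEQ_inverse_real_of_nat)
  have "Y \<longlonglongrightarrow> x" "Z \<longlonglongrightarrow> x"
    by (rule LIM_zero_cancel, rule Lim_null_comparison[OF _ e0], use YZ in auto)+
  moreover have "continuous_on UNIV (\<lambda>y. a \<bullet> (HU y *v b))" for a b
    unfolding matrix_mult_dot by (intro continuous_intros continuous_on_vec_lambda cont)
  ultimately have "(\<lambda>n. u \<bullet> (HU (Y n) *v v)) \<longlonglongrightarrow> u \<bullet> (HU x *v v)"
    and "(\<lambda>n. u \<bullet> (HU (Y n) *v v)) \<longlonglongrightarrow> v \<bullet> (HU x *v u)"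
    using continuous_on_tendsto_compose[of UNIV] eq by fastforce+
  then show ?thesis by (rule LIMSEQ_unique)
qed

lemma bounded_linear_matrix_vector_mult_left: "bounded_linear (\<lambda>A::real^'n^'m. A *v x)"
  unfolding linear_conv_bounded_linear[symmetric]
  by (simp add: linear_iff matrix_vector_mult_add_rdistrib scaleR_matrix_vector_assoc)

lemma has_integral_matrix_vector_mult:
  fixes A :: "real \<Rightarrow> real^'n^'m"
  assumes "(A has_integral M) S"
  shows "((\<lambda>t. A t *v x) has_integral M *v x) S"
  using has_integral_linear[OF assms bounded_linear_matrix_vector_mult_left] by (simp add: o_def)

lemma has_integral_inner_matrix_vector_mult:
  fixes A :: "real \<Rightarrow> real^'n^'m"
  assumes "(A has_integral M) S"
  shows "((\<lambda>t. x \<bullet> (A t *v y)) has_integral x \<bullet> (M *v y)) S"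
  using has_integral_linear[OF has_integral_matrix_vector_mult[OF assms] bounded_linear_inner_right]
  by (simp add: o_def)

lemma integral_matrix_vector_mult:
  fixes A :: "real \<Rightarrow> real^'n^'m"
  assumes "A integrable_on S"
  shows "integral S (\<lambda>t. A t *v x) = integral S A *v x"
  using has_integral_matrix_vector_mult[OF integrable_integral[OF assms]] by (rule integral_unique)

lemma integral_symmetric_matrix:
  fixes A :: "real \<Rightarrow> real^'n^'n"
  assumes sym: "\<And>t x y. x \<bullet> (A t *v y) = y \<bullet> (A t *v x)"
  shows "x \<bullet> (integral S A *v y) = y \<bullet> (integral S A *v x)"
proof (cases "A integrable_on S")
  case True
  have "(\<lambda>t. y \<bullet> (A t *v x)) = (\<lambda>t. x \<bullet> (A t *v y))"
    by (rule ext) (rule sym)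
  then show ?thesis
    using has_integral_inner_matrix_vector_mult[OF integrable_integral[OF True], of x y]
      has_integral_inner_matrix_vector_mult[OF integrable_integral[OF True], of y x]
    by (metis has_integral_unique)
next
  case False
  then show ?thesis
    by (simp add: not_integrable_integral)
qed

lemma integral_affine_weight_inner_matrix_vector_mult:
  fixes A :: "real \<Rightarrow> real^'n^'m"
  assumes "continuous_on {0..1} A" and "\<And>t. k t = a + b * t"
  shows "integral {0..1} (\<lambda>t. (x \<bullet> (A t *v y)) * k t)
           = x \<bullet> ((a *\<^sub>R integral {0..1} A + b *\<^sub>R integral {0..1} (\<lambda>t. t *\<^sub>R A t)) *v y)"
proof (rule integral_unique)
  have "((\<lambda>t. k t *\<^sub>R A t) has_integral a *\<^sub>R integral {0..1} A + b *\<^sub>R integral {0..1} (\<lambda>t. t *\<^sub>R A t)) {0..1}"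
    using has_integral_add[OF has_integral_cmul[of A _ _ a] has_integral_cmul[of "\<lambda>t. t *\<^sub>R A t" _ _ b]]
      assms(1)
    by (simp add: assms(2) scaleR_add_left integrable_integral integrable_continuous_interval
        continuous_intros)
  from has_integral_inner_matrix_vector_mult[OF this, of x y]
  show "((\<lambda>t. (x \<bullet> (A t *v y)) * k t) has_integral
          x \<bullet> ((a *\<^sub>R integral {0..1} A + b *\<^sub>R integral {0..1} (\<lambda>t. t *\<^sub>R A t)) *v y)) {0..1}"
    by (simp add: scaleR_matrix_vector_assoc[symmetric] mult.commute)
qed

lemma gradient_increment_eq_integral:
  fixes gU :: "real^'n \<Rightarrow> real^'n"
  assumes hess: "\<And>x. (gU has_derivative (\<lambda>v. HU x *v v)) (at x)"
    and cont: "continuous_on UNIV HU"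
  shows "gU (x + d) = gU x + integral {0..1} (\<lambda>t. HU (x + t *\<^sub>R d)) *v d"
proof -
  have "((\<lambda>t. HU (x + t *\<^sub>R d)) has_integral integral {0..1} (\<lambda>t. HU (x + t *\<^sub>R d))) {0..1}"
    by (intro integrable_integral integrable_continuous_interval continuous_on_compose2[OF cont]
        continuous_intros) auto
  from has_integral_matrix_vector_mult[OF this]
  have "((\<lambda>t. HU (x + t *\<^sub>R d) *v d) has_integral integral {0..1} (\<lambda>t. HU (x + t *\<^sub>R d)) *v d) {0..1}" .
  moreover have "((\<lambda>t. HU (x + t *\<^sub>R d) *v d) has_integral gU (x + d) - gU x) {0..1}"
    using fundamental_theorem_of_calculus[of 0 1 "\<lambda>t. gU (x + t *\<^sub>R d)",
        OF _ has_vector_derivative_along_line[OF hess]]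
    by simp
  ultimately have "integral {0..1} (\<lambda>t. HU (x + t *\<^sub>R d)) *v d = gU (x + d) - gU x"
    by (rule has_integral_unique)
  then show ?thesis
    by (simp add: algebra_simps)
qed

text \<open>\<open>U (x + t d) + (1 - t) \<langle>d, \<nabla>U (x + t d)\<rangle>\<close> is an antiderivative of the integrand.\<close>
lemma taylor_remainder_has_integral:
  fixes U :: "real^'n \<Rightarrow> real" and gU :: "real^'n \<Rightarrow> real^'n"
  assumes grad: "\<And>x. (U has_derivative (\<lambda>v. gU x \<bullet> v)) (at x)"
    and hess: "\<And>x. (gU has_derivative (\<lambda>v. HU x *v v)) (at x)"
  shows "((\<lambda>t. (d \<bullet> (HU (x + t *\<^sub>R d) *v d)) * (1 - t)) has_integral
           U (x + d) - U x - gU x \<bullet> d) {0..1}"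
proof -
  define F where "F = (\<lambda>t. U (x + t *\<^sub>R d) + (1 - t) * (d \<bullet> gU (x + t *\<^sub>R d)))"
  have "(F has_real_derivative (d \<bullet> (HU (x + t *\<^sub>R d) *v d)) * (1 - t)) (at t within {0..1})" for t
  proof -
    have "((\<lambda>s. 1 - s) has_real_derivative -1) (at t within {0..1})"
      by (auto intro!: derivative_eq_intros)
    from DERIV_add[OF has_real_derivative_along_line[OF grad]
        DERIV_mult'[OF this has_real_derivative_inner_along_line[OF hess]]]
    show ?thesis
      unfolding F_def by (rule DERIV_cong) (simp add: inner_commute algebra_simps)
  qed
  then have "((\<lambda>t. (d \<bullet> (HU (x + t *\<^sub>R d) *v d)) * (1 - t)) has_integral F 1 - F 0) {0..1}"
    by (intro fundamental_theorem_of_calculus)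
      (auto simp: has_real_derivative_iff_has_vector_derivative)
  then show ?thesis
    by (simp add: F_def inner_commute diff_diff_eq)
qed

lemma taylor_integral_remainder:
  fixes U :: "real^'n \<Rightarrow> real" and gU :: "real^'n \<Rightarrow> real^'n"
  assumes grad: "\<And>x. (U has_derivative (\<lambda>v. gU x \<bullet> v)) (at x)"
    and hess: "\<And>x. (gU has_derivative (\<lambda>v. HU x *v v)) (at x)"
    and cont: "continuous_on UNIV HU"
  shows "U (x + d) = U x + gU x \<bullet> d + d \<bullet> ((integral {0..1} (\<lambda>t. HU (x + t *\<^sub>R d))
                     - integral {0..1} (\<lambda>t. t *\<^sub>R HU (x + t *\<^sub>R d))) *v d)"
proof -
  have "U (x + d) - U x - gU x \<bullet> d = integral {0..1} (\<lambda>t. (d \<bullet> (HU (x + t *\<^sub>R d) *v d)) * (1 - t))"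
    using integral_unique[OF taylor_remainder_has_integral[OF grad hess]] by simp
  also have "\<dots> = d \<bullet> ((integral {0..1} (\<lambda>t. HU (x + t *\<^sub>R d))
                     - integral {0..1} (\<lambda>t. t *\<^sub>R HU (x + t *\<^sub>R d))) *v d)"
    by (subst integral_affine_weight_inner_matrix_vector_mult[where a=1 and b="-1"])
      (auto intro!: continuous_on_compose2[OF cont] continuous_intros)
  finally show ?thesis
    by simp
qed

lemma leapfrog_apply:
  "leapfrog gU h (q, p) = (q + (h *\<^sub>R p - (h^2/2) *\<^sub>R gU q),
     p - (h/2) *\<^sub>R gU q - (h/2) *\<^sub>R gU (q + (h *\<^sub>R p - (h^2/2) *\<^sub>R gU q)))"
  by (simp add: leapfrog_def kick_def drift_def algebra_simps power2_eq_square)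

lemma leapfrog_energy_error_quadratic:
  fixes M0 M1 :: "real^'n^'n" and p g d :: "real^'n"
  assumes sym0: "\<And>x y. x \<bullet> (M0 *v y) = y \<bullet> (M0 *v x)"
    and sym1: "\<And>x y. x \<bullet> (M1 *v y) = y \<bullet> (M1 *v x)"
    and d: "d = h *\<^sub>R p - (h^2/2) *\<^sub>R g"
  shows "g \<bullet> d + d \<bullet> ((M0 - M1) *v d)
           + (norm (p - (h/2) *\<^sub>R g - (h/2) *\<^sub>R (g + M0 *v d)))^2 / 2 - (norm p)^2 / 2
       = h^2 * (p \<bullet> (((1/2) *\<^sub>R M0 - M1) *v p)) + h^3 * (p \<bullet> ((M1 - (1/4) *\<^sub>R M0) *v g))
         - h^4 / 4 * (g \<bullet> (M1 *v g)) + h^4 / 8 * (norm (M0 *v p))^2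
         - h^5 / 8 * ((M0 *v g) \<bullet> (M0 *v p)) + h^6 / 32 * (norm (M0 *v g))^2"
  unfolding d power2_norm_eq_inner
  apply (simp add: matrix_vector_mult_diff_distrib matrix_vector_right_distrib
      matrix_vector_mult_scaleR matrix_vector_mult_diff_rdistrib scaleR_matrix_vector_assoc[symmetric]
      inner_diff_left inner_diff_right inner_add_left inner_add_right sym0 sym1 inner_commute)
  by (simp add: field_simps eval_nat_numeral)

theorem lemma15:
  fixes U :: "real^'n \<Rightarrow> real"
    and gU :: "real^'n \<Rightarrow> real^'n"
    and HU :: "real^'n \<Rightarrow> real^'n^'n"
    and q0 p0 :: "real^'n" and h :: real
  assumes grad: "\<And>x. (U has_derivative (\<lambda>v. gU x \<bullet> v)) (at x)"
    and hess: "\<And>x. (gU has_derivative (\<lambda>v. HU x *v v)) (at x)"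
    and hess_cont: "continuous_on UNIV HU"
    and h: "h > 0"
  shows "let q1 = fst (leapfrog gU h (q0, p0));
             qt = (\<lambda>t::real. q0 + t *\<^sub>R (q1 - q0))
         in ham U (leapfrog gU h (q0, p0)) - ham U (q0, p0)
          = h^2 * integral {0..1} (\<lambda>t. (p0 \<bullet> (HU (qt t) *v p0)) * (1/2 - t))
          + h^3 * integral {0..1} (\<lambda>t. (p0 \<bullet> (HU (qt t) *v gU q0)) * (t - 1/4))
          - h^4 / 4 * integral {0..1} (\<lambda>t. (gU q0 \<bullet> (HU (qt t) *v gU q0)) * t)
          + h^4 / 8 * (norm (integral {0..1} (\<lambda>t. HU (qt t) *v p0)))^2
          - h^5 / 8 * (integral {0..1} (\<lambda>t. HU (qt t) *v gU q0) \<bullet> integral {0..1} (\<lambda>t. HU (qt t) *v p0))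
          + h^6 / 32 * (norm (integral {0..1} (\<lambda>t. HU (qt t) *v gU q0)))^2"
proof -
  define g where "g = gU q0"
  define d where "d = h *\<^sub>R p0 - (h^2/2) *\<^sub>R g"
  define A where "A = (\<lambda>t. HU (q0 + t *\<^sub>R d))"
  define M0 where "M0 = integral {0..1} A"
  define M1 where "M1 = integral {0..1} (\<lambda>t. t *\<^sub>R A t)"
  have A_cont: "continuous_on {0..1} A"
    unfolding A_def by (intro continuous_on_compose2[OF hess_cont] continuous_intros) auto
  have A_sym: "x \<bullet> (A t *v y) = y \<bullet> (A t *v x)" for t x y
    unfolding A_def by (rule hessian_symmetric[OF grad hess hess_cont])
  have sym0: "x \<bullet> (M0 *v y) = y \<bullet> (M0 *v x)" and sym1: "x \<bullet> (M1 *v y) = y \<bullet> (M1 *v x)" for x y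
    unfolding M0_def M1_def
    by (rule integral_symmetric_matrix, simp add: A_sym scaleR_matrix_vector_assoc[symmetric])+
  have integrals:
    "integral {0..1} (\<lambda>t. (x \<bullet> (A t *v y)) * (1/2 - t)) = x \<bullet> (((1/2) *\<^sub>R M0 - M1) *v y)"
    "integral {0..1} (\<lambda>t. (x \<bullet> (A t *v y)) * (t - 1/4)) = x \<bullet> ((M1 - (1/4) *\<^sub>R M0) *v y)"
    "integral {0..1} (\<lambda>t. (x \<bullet> (A t *v y)) * t) = x \<bullet> (M1 *v y)"
    "integral {0..1} (\<lambda>t. A t *v y) = M0 *v y" for x y
    using integral_affine_weight_inner_matrix_vector_mult[OF A_cont, where k="\<lambda>t. 1/2 - t" and a="1/2" and b="-1"]
      integral_affine_weight_inner_matrix_vector_mult[OF A_cont, where k="\<lambda>t. t - 1/4" and a="-1/4" and b=1]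
      integral_affine_weight_inner_matrix_vector_mult[OF A_cont, where k="\<lambda>t. t" and a=0 and b=1]
      integral_matrix_vector_mult[OF integrable_continuous_interval[OF A_cont]]
    by (simp_all add: M0_def M1_def algebra_simps)
  have gU_q1: "gU (q0 + d) = g + M0 *v d"
    using gradient_increment_eq_integral[OF hess hess_cont] by (simp add: M0_def A_def g_def)
  have U_q1: "U (q0 + d) = U q0 + g \<bullet> d + d \<bullet> ((M0 - M1) *v d)"
    using taylor_integral_remainder[OF grad hess hess_cont] by (simp add: M0_def M1_def A_def g_def)
  show ?thesis
    using leapfrog_energy_error_quadratic[OF sym0 sym1 d_def]
    unfolding Let_def leapfrog_apply fst_conv ham_def prod.case g_def[symmetric] d_def[symmetric]
      add_diff_cancel_left' integrals[unfolded A_def] U_q1 gU_q1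
    by linarith
qed

end
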